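(* For $0<\alpha\le 1$, integers $n,m\ge 0$ and $\delta\in(0,1)$, define $$c_\alpha(n,m,\delta)=\frac{\int_0^\delta \theta^{\alpha m}(1-\theta^\alpha)^n\,\mathrm{d}\theta}{\int_0^1 \theta^{\alpha m}(1-\theta^\alpha)^n\,\mathrm{d}\theta}.$$ Let $\varphi(\theta)=\theta^\alpha$ and $\psi(\theta)=\theta^\beta$ with $1\ge\alpha>\beta>0$. Then $\varphi(\theta)\le\psi(\theta)$ for all $\theta\in[0,1]$, and $c_\alpha(n,m,\delta)\le c_\beta(n,m,\delta)$ for all $n,m\in\mathbb{N}$ and all $\delta\in(0,1)$.
   Context: Interpretation: $\varphi(\theta)$ is the "effectiveness function" of a sampling method, i.e. the probability that one sample is negative when the true error probability is $\theta$; $c_\alpha(n,m,\delta)$ (written $c_\varphi$ in the paper) is the posterior probability, under a uniform prior on $\theta\in[0,1]$, that $\theta<\delta$ after observing $m$ negative and $n$ positive samples produced by a method with effectiveness $\theta^\alpha$. $\mathbb{N}$ includes $0$. *)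

theory Defs
  imports "HOL-Analysis.Analysis"
begin

definition eff :: "real \<Rightarrow> real \<Rightarrow> real" where
  "eff \<alpha> \<theta> = \<theta> powr \<alpha>"

definition c_post :: "real \<Rightarrow> nat \<Rightarrow> nat \<Rightarrow> real \<Rightarrow> real" where
  "c_post \<alpha> n m \<delta> =
     (LBINT \<theta>=0..\<delta>. (eff \<alpha> \<theta>) ^ m * (1 - eff \<alpha> \<theta>) ^ n) /
     (LBINT \<theta>=0..1. (eff \<alpha> \<theta>) ^ m * (1 - eff \<alpha> \<theta>) ^ n)"

end

theory Submission
  imports Defs
begin

text \<open>Both posteriors are normalised integrals of the densities
  \<open>\<theta>\<^sup>\<alpha>\<^sup>m (1 - \<theta>\<^sup>\<alpha>)\<^sup>n\<close> and \<open>\<theta>\<^sup>\<beta>\<^sup>m (1 - \<theta>\<^sup>\<beta>)\<^sup>n\<close>. Their ratio (\<beta> over \<alpha>) is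
  decreasing in \<theta>: \<open>\<theta>\<^sup>\<beta> / \<theta>\<^sup>\<alpha>\<close> decreases since \<open>\<beta> < \<alpha>\<close>, and
  \<open>(1 - \<theta>\<^sup>\<beta>) / (1 - \<theta>\<^sup>\<alpha>)\<close> decreases because, with \<open>u = \<theta>\<^sup>\<beta>\<close> and \<open>r = \<alpha>/\<beta> \<ge> 1\<close>,
  the secant slope \<open>(1 - u\<^sup>r) / (1 - u)\<close> of the convex function \<open>u\<^sup>r\<close> increases.
  A density that dominates another in this likelihood-ratio order puts at least as much
  relative mass on every initial segment \<open>[0, \<delta>]\<close>.\<close>

lemma divide_add_le_divide_add:
  fixes F F' G G' :: real
  assumes "0 \<le> F" "0 \<le> F'" "0 \<le> G" "0 \<le> G'"
    and cross: "F * G' \<le> G * F'"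
    and "G = 0 \<Longrightarrow> F = 0"
  shows "F / (F + F') \<le> G / (G + G')"
proof (cases "F + F' = 0 \<or> G + G' = 0")
  case True
  then show ?thesis using assms by fastforce
next
  case False
  then have "0 < F + F'" "0 < G + G'" using assms by auto
  then show ?thesis using cross by (simp add: divide_simps algebra_simps)
qed

lemma integral_mult_le_mult_integral:
  fixes f g :: "real \<Rightarrow> real"
  assumes "f integrable_on {a..b}" "g integrable_on {a..b}"
    and "\<And>x. x \<in> {a..b} \<Longrightarrow> f x * g p \<le> f p * g x"
  shows "integral {a..b} f * g p \<le> f p * integral {a..b} g"
proof -
  have "integral {a..b} f * g p = integral {a..b} (\<lambda>x. f x * g p)" by simp
  also have "\<dots> \<le> integral {a..b} (\<lambda>x. f p * g x)"
    using assms by (intro integral_le) (auto intro: integrable_on_mult_left integrable_on_mult_right)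
  also have "\<dots> = f p * integral {a..b} g" by simp
  finally show ?thesis .
qed

lemma integral_initial_ratio_le_of_likelihood_ratio:
  fixes f g :: "real \<Rightarrow> real"
  assumes f_int: "f integrable_on {a..b}" and g_int: "g integrable_on {a..b}"
    and d: "a \<le> d" "d \<le> b"
    and f_nonneg: "\<And>x. x \<in> {a..b} \<Longrightarrow> 0 \<le> f x"
    and g_nonneg: "\<And>x. x \<in> {a..b} \<Longrightarrow> 0 \<le> g x"
    and g_pos: "0 < g d"
    and ratio: "\<And>x y. a \<le> x \<Longrightarrow> x \<le> y \<Longrightarrow> y \<le> b \<Longrightarrow> f x * g y \<le> f y * g x"
  shows "integral {a..d} f / integral {a..b} f \<le> integral {a..d} g / integral {a..b} g"
proof -
  have int_lo: "f integrable_on {a..d}" "g integrable_on {a..d}"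
    and int_hi: "f integrable_on {d..b}" "g integrable_on {d..b}"
    using f_int g_int d by (auto intro: integrable_subinterval_real)
  define F G F' G' where "F = integral {a..d} f" and "G = integral {a..d} g"
    and "F' = integral {d..b} f" and "G' = integral {d..b} g"
  have total: "integral {a..b} f = F + F'" "integral {a..b} g = G + G'"
    unfolding F_def G_def F'_def G'_def using d f_int g_int
    by (simp_all add: Henstock_Kurzweil_Integration.integral_combine)
  have nonneg: "0 \<le> F" "0 \<le> G" "0 \<le> F'" "0 \<le> G'"
    unfolding F_def G_def F'_def G'_def using int_lo int_hi f_nonneg g_nonneg d
    by (auto intro: integral_nonneg)
  have lo: "F * g d \<le> f d * G"
    unfolding F_def G_def using int_lo d by (intro integral_mult_le_mult_integral ratio) auto
  have hi: "G' * f d \<le> g d * F'"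
    unfolding F'_def G'_def using int_hi d
    by (intro integral_mult_le_mult_integral) (auto simp: mult.commute intro: ratio)
  have "g d * (F * G') \<le> g d * (G * F')"
  proof -
    have "g d * (F * G') = (F * g d) * G'" by simp
    also have "\<dots> \<le> (f d * G) * G'" using lo nonneg by (intro mult_right_mono)
    also have "\<dots> = G * (G' * f d)" by simp
    also have "\<dots> \<le> G * (g d * F')" using hi nonneg by (intro mult_left_mono)
    also have "\<dots> = g d * (G * F')" by simp
    finally show ?thesis .
  qed
  then have "F * G' \<le> G * F'" using g_pos by simp
  moreover have "G = 0 \<Longrightarrow> F = 0" using lo g_pos nonneg by (simp add: mult_le_0_iff)
  ultimately show ?thesis
    unfolding total F_def[symmetric] G_def[symmetric]
    using nonneg by (intro divide_add_le_divide_add)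
qed

text \<open>The secant slope of \<open>u \<mapsto> u powr r\<close> towards \<open>1\<close> is increasing, cross-multiplied
  so that no division by \<open>1 - s\<close> occurs.\<close>

lemma one_minus_powr_secant_mono:
  fixes s t r :: real
  assumes "0 \<le> s" "s \<le> t" "t \<le> 1" "1 \<le> r"
  shows "(1 - s powr r) * (1 - t) \<le> (1 - t powr r) * (1 - s)"
proof -
  consider "s = 0" | "t = 1" | "0 < s" "t < 1" using assms by linarith
  then show ?thesis
  proof cases
    case 1
    have "t powr r \<le> t" using assms powr_le_one_le[of t r] by (cases "t = 0") simp_all
    with 1 show ?thesis by simp
  next
    case 2
    then show ?thesis by simp
  next
    case 3
    have "s < 1" using 3 assms by simp
    define l where "l = (t - s) / (1 - s)"
    have l: "0 \<le> l" "l \<le> 1" "1 - l = (1 - t) / (1 - s)"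
      unfolding l_def using assms \<open>s < 1\<close> by (auto simp: field_simps)
    have "l * (1 - s) = t - s" unfolding l_def using \<open>s < 1\<close> by simp
    then have "(1 - l) * s + l = t" by (simp add: algebra_simps)
    have "convex_on {0<..} (\<lambda>x. x powr r)" using powr_convex assms by simp
    then have "((1 - l) * s + l) powr r \<le> (1 - l) * s powr r + l * 1 powr r"
      using convex_onD[of "{0<..}" "\<lambda>x. x powr r" l s 1] l 3 by simp
    then have "t powr r \<le> (1 - l) * s powr r + l" using \<open>(1 - l) * s + l = t\<close> by simp
    then have "(1 - t) / (1 - s) * (1 - s powr r) \<le> 1 - t powr r"
      unfolding l(3)[symmetric] by (simp add: algebra_simps)
    then show ?thesis using \<open>s < 1\<close> by (simp add: divide_simps mult.commute)
  qed
qed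

lemma one_minus_powr_ratio_antimono:
  fixes x y a b :: real
  assumes "0 \<le> x" "x \<le> y" "y \<le> 1" "0 < b" "b \<le> a"
  shows "(1 - x powr a) * (1 - y powr b) \<le> (1 - y powr a) * (1 - x powr b)"
proof -
  have "z powr a = (z powr b) powr (a / b)" for z using assms by (simp add: powr_powr)
  moreover have "x powr b \<le> y powr b" "y powr b \<le> 1"
    using assms powr_mono2[of b y 1] by (auto intro: powr_mono2)
  ultimately show ?thesis
    using assms by (simp only:) (intro one_minus_powr_secant_mono, auto)
qed

lemma powr_ratio_antimono:
  fixes x y a b :: real
  assumes "0 \<le> x" "x \<le> y" "b \<le> a"
  shows "x powr a * y powr b \<le> y powr a * x powr b"
proof (cases "x = 0")
  case True
  then show ?thesis by simp
next
  case False
  have "x powr (a - b) * (x powr b * y powr b) \<le> y powr (a - b) * (x powr b * y powr b)"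
    using assms by (intro mult_right_mono powr_mono2) auto
  moreover have "z powr a = z powr (a - b) * z powr b" for z :: real
    by (simp flip: powr_add)
  ultimately show ?thesis by (simp add: mult_ac)
qed

definition post_density :: "real \<Rightarrow> nat \<Rightarrow> nat \<Rightarrow> real \<Rightarrow> real" where
  "post_density \<alpha> n m \<theta> = eff \<alpha> \<theta> ^ m * (1 - eff \<alpha> \<theta>) ^ n"

lemma post_density_nonneg:
  "0 \<le> \<alpha> \<Longrightarrow> 0 \<le> \<theta> \<Longrightarrow> \<theta> \<le> 1 \<Longrightarrow> 0 \<le> post_density \<alpha> n m \<theta>"
  unfolding post_density_def eff_def using powr_mono2[of \<alpha> \<theta> 1] by simp

lemma post_density_pos:
  "0 < \<alpha> \<Longrightarrow> 0 < \<theta> \<Longrightarrow> \<theta> < 1 \<Longrightarrow> 0 < post_density \<alpha> n m \<theta>"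
  unfolding post_density_def eff_def using powr_less_mono2[of \<alpha> \<theta> 1] by simp

lemma continuous_on_post_density:
  "0 < \<alpha> \<Longrightarrow> continuous_on {0..1} (post_density \<alpha> n m)"
  unfolding post_density_def eff_def by (intro continuous_intros continuous_on_powr') auto

lemma post_density_likelihood_ratio:
  fixes x y \<alpha> \<beta> :: real
  assumes "0 \<le> x" "x \<le> y" "y \<le> 1" "0 < \<beta>" "\<beta> \<le> \<alpha>"
  shows "post_density \<alpha> n m x * post_density \<beta> n m y \<le> post_density \<alpha> n m y * post_density \<beta> n m x"
proof -
  have one_minus_nonneg: "0 \<le> 1 - z powr c" if "0 \<le> z" "z \<le> 1" "0 \<le> c" for z c :: real
    using powr_mono2[of c z 1] that by simp
  have "(x powr \<alpha> * y powr \<beta>) ^ m \<le> (y powr \<alpha> * x powr \<beta>) ^ m"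
    using assms powr_ratio_antimono[of x y \<beta> \<alpha>] by (intro power_mono) auto
  moreover have "((1 - x powr \<alpha>) * (1 - y powr \<beta>)) ^ n \<le> ((1 - y powr \<alpha>) * (1 - x powr \<beta>)) ^ n"
    using assms one_minus_powr_ratio_antimono[of x y \<beta> \<alpha>]
    by (intro power_mono mult_nonneg_nonneg one_minus_nonneg) auto
  ultimately have "(x powr \<alpha> * y powr \<beta>) ^ m * ((1 - x powr \<alpha>) * (1 - y powr \<beta>)) ^ n
      \<le> (y powr \<alpha> * x powr \<beta>) ^ m * ((1 - y powr \<alpha>) * (1 - x powr \<beta>)) ^ n"
    using assms by (intro mult_mono zero_le_power mult_nonneg_nonneg one_minus_nonneg) auto
  then show ?thesis
    unfolding post_density_def eff_def by (simp add: power_mult_distrib mult_ac)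
qed

lemma c_post_eq_integral_ratio:
  assumes "0 < \<alpha>" "0 \<le> \<delta>" "\<delta> \<le> 1"
  shows "c_post \<alpha> n m \<delta> =
    integral {0..\<delta>} (post_density \<alpha> n m) / integral {0..1} (post_density \<alpha> n m)"
proof -
  have "(LBINT \<theta>=0..c. post_density \<alpha> n m \<theta>) = integral {0..c} (post_density \<alpha> n m)"
    if "0 \<le> c" "c \<le> 1" for c
  proof -
    have "continuous_on {0..c} (post_density \<alpha> n m)"
      by (rule continuous_on_subset[OF continuous_on_post_density[OF \<open>0 < \<alpha>\<close>]])
        (use that in auto)
    then have "set_integrable lborel {0..c} (post_density \<alpha> n m)"
      by (rule borel_integrable_atLeastAtMost')
    then show ?thesis using that interval_integral_eq_integral[of 0 c]
      by (simp add: zero_ereal_def)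
  qed
  from this[of \<delta>] this[of 1] show ?thesis
    using assms unfolding c_post_def post_density_def[symmetric] by (simp add: one_ereal_def)
qed

theorem theorem1:
  fixes \<alpha> \<beta> :: real
  assumes "\<alpha> \<le> 1" and "\<beta> < \<alpha>" and "0 < \<beta>"
  shows "(\<forall>\<theta>\<in>{0..1}. eff \<alpha> \<theta> \<le> eff \<beta> \<theta>) \<and>
         (\<forall>(n::nat) (m::nat) (\<delta>::real). 0 < \<delta> \<and> \<delta> < 1 \<longrightarrow>
            c_post \<alpha> n m \<delta> \<le> c_post \<beta> n m \<delta>)"
proof (intro conjI allI impI ballI)
  fix \<theta> :: real
  assume "\<theta> \<in> {0..1}"
  then show "eff \<alpha> \<theta> \<le> eff \<beta> \<theta>"
    unfolding eff_def using assms by (intro powr_mono') auto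
next
  fix n m :: nat and \<delta> :: real
  assume \<delta>: "0 < \<delta> \<and> \<delta> < 1"
  have "0 < \<alpha>" using assms by simp
  have c_post_eqs: "c_post \<alpha> n m \<delta> =
      integral {0..\<delta>} (post_density \<alpha> n m) / integral {0..1} (post_density \<alpha> n m)"
    "c_post \<beta> n m \<delta> =
      integral {0..\<delta>} (post_density \<beta> n m) / integral {0..1} (post_density \<beta> n m)"
    using \<delta> \<open>0 < \<alpha>\<close> \<open>0 < \<beta>\<close> by (simp_all add: c_post_eq_integral_ratio)
  show "c_post \<alpha> n m \<delta> \<le> c_post \<beta> n m \<delta>"
    unfolding c_post_eqs using \<delta> \<open>0 < \<alpha>\<close> assms
    by (intro integral_initial_ratio_le_of_likelihood_ratio integrable_continuous_interval
        continuous_on_post_density post_density_nonneg post_density_pos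
        post_density_likelihood_ratio) auto
qed

end
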